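(* Let $n\ge2$, let $T=(n;\sigma,\delta,\tau)$ with $\sigma,\delta,\tau\in\mathbb{R}$, $\tau\ne0$ and $\sigma=-\tau$ (a real shifted skew-symmetric tridiagonal Toeplitz matrix). Let $\varepsilon\in\mathbb{R}$ and let $E=(n;-e_1,e_0,e_1)$ with $e_0,e_1\in\mathbb{R}$ be such that $\tau+\varepsilon e_1$ is nonzero and has the same sign as $\tau$. Then for each $h=1,\dots,n$ the unit eigenvector $\widetilde x_h$ of $T$ and the corresponding unit eigenvector $\widetilde x_h^\varepsilon$ of $T+\varepsilon E$ satisfy $\cos\theta_{\widetilde x_h,\widetilde x_h^\varepsilon}=1$; i.e. the eigenvectors are perfectly conditioned with respect to structured perturbations preserving skew-symmetry and the signs of the off-diagonals.
   Context: $(n;\sigma,\delta,\tau)$ denotes the $n\times n$ tridiagonal Toeplitz matrix with diagonal $\delta$, superdiagonal $\tau$, subdiagonal $\sigma$. For $\sigma\tau\ne0$, the eigenvector associated with $\lambda_h=\delta+2\sqrt{\sigma\tau}\cos\frac{h\pi}{n+1}$ has components $(\sqrt{\sigma/\tau})^k\sin\frac{hk\pi}{n+1}$, $k=1,\dots,n$. For unit vectors $x,x'$, $\cos\theta_{x,x'}=|x^Hx'|$. *)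

theory Defs
  imports Complex_Main "Jordan_Normal_Form.Matrix" "Jordan_Normal_Form.Char_Poly"
begin

definition tridiag_toeplitz :: "nat \<Rightarrow> complex \<Rightarrow> complex \<Rightarrow> complex \<Rightarrow> complex mat" where
  "tridiag_toeplitz n \<sigma> \<delta> \<tau> = mat n n (\<lambda>(i,j).
     if i = j then \<delta> else if i = j + 1 then \<sigma> else if j = i + 1 then \<tau> else 0)"

definition tt_eigenvalue :: "nat \<Rightarrow> complex \<Rightarrow> complex \<Rightarrow> complex \<Rightarrow> nat \<Rightarrow> complex" where
  "tt_eigenvalue n \<sigma> \<delta> \<tau> h =
     \<delta> + 2 * csqrt (\<sigma> * \<tau>) * of_real (cos (real h * pi / real (n + 1)))"

definition unit_cvec :: "complex vec \<Rightarrow> bool" where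
  "unit_cvec x \<longleftrightarrow> x \<bullet>c x = 1"

definition cos_angle :: "complex vec \<Rightarrow> complex vec \<Rightarrow> real" where
  "cos_angle x x' = cmod (x' \<bullet>c x)"

end

theory Submission
  imports Defs
begin

text \<open>
  For \<open>\<sigma> = -\<tau>\<close> the matrix \<open>(n; -\<tau>, \<delta>, \<tau>)\<close> is \<open>\<delta> I + \<tau> K\<close> with the skew
  matrix \<open>K = (n; -1, 0, 1)\<close>, and since \<open>sqrt(\<sigma>\<tau>) = i |\<tau>|\<close> its eigenvalue \<open>\<lambda>\<^sub>h\<close> is
  \<open>\<delta> + \<tau> \<mu>\<^sub>h\<close> with \<open>\<mu>\<^sub>h = 2 i sgn(\<tau>) cos(h\<pi>/(n+1))\<close>. So the \<open>\<lambda>\<^sub>h\<close>-eigenvectors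
  of \<open>T\<close> are the \<open>\<mu>\<^sub>h\<close>-eigenvectors of \<open>K\<close>; the same holds for \<open>T + \<epsilon>E\<close>, which has the
  same pattern with superdiagonal \<open>\<tau> + \<epsilon>e\<^sub>1\<close> of the same sign, hence the same \<open>\<mu>\<^sub>h\<close>.
  A tridiagonal Toeplitz matrix with nonzero superdiagonal has one-dimensional eigenspaces,
  since the eigen-equation is a three-term recurrence started at the first entry. Thus two
  unit eigenvectors differ by a unimodular factor and \<open>|x\<^sup>H x'| = 1\<close>. Existence comes
  from the classical eigenvector \<open>(r\<^sup>k sin(kh\<pi>/(n+1)))\<^sub>k\<close> with \<open>r\<^sup>2 = \<sigma>/\<tau>\<close>.
\<close>

lemma dim_row_tridiag_toeplitz [simp]: "dim_row (tridiag_toeplitz n s d t) = n"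
  and dim_col_tridiag_toeplitz [simp]: "dim_col (tridiag_toeplitz n s d t) = n"
  by (simp_all add: tridiag_toeplitz_def)

lemma tridiag_toeplitz_carrier_mat [simp]: "tridiag_toeplitz n s d t \<in> carrier_mat n n"
  by (simp add: carrier_matI)

lemma tridiag_toeplitz_mult_vec_nth:
  assumes x: "x \<in> carrier_vec n" and i: "i < n"
  shows "(tridiag_toeplitz n s d t *\<^sub>v x) $ i =
    (if 0 < i then s * x $ (i - 1) else 0) + d * x $ i + (if i + 1 < n then t * x $ (i + 1) else 0)"
proof -
  have "(tridiag_toeplitz n s d t *\<^sub>v x) $ i = (\<Sum>j<n.
      (if i = j then d else if i = j + 1 then s else if j = i + 1 then t else 0) * x $ j)"
    using x i by (simp add: tridiag_toeplitz_def scalar_prod_def lessThan_atLeast0)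
  also have "\<dots> = (\<Sum>j<n. (if j = i then d * x $ j else 0)
      + (if j = i - 1 \<and> 0 < i then s * x $ j else 0) + (if j = i + 1 then t * x $ j else 0))"
    by (rule sum.cong) auto
  also have "\<dots> = (if 0 < i then s * x $ (i - 1) else 0) + d * x $ i
      + (if i + 1 < n then t * x $ (i + 1) else 0)"
    using i by (simp add: sum.distrib)
  finally show ?thesis .
qed

lemma tridiag_toeplitz_affine:
  "tridiag_toeplitz n (c * s) (c * d + e) (c * t) = c \<cdot>\<^sub>m tridiag_toeplitz n s d t + e \<cdot>\<^sub>m 1\<^sub>m n"
  by (rule eq_matI) (auto simp: tridiag_toeplitz_def)

lemma affine_mult_mat_vec:
  fixes A :: "'a::comm_ring_1 mat"
  assumes "A \<in> carrier_mat n n" and "x \<in> carrier_vec n"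
  shows "(c \<cdot>\<^sub>m A + e \<cdot>\<^sub>m 1\<^sub>m n) *\<^sub>v x = c \<cdot>\<^sub>v (A *\<^sub>v x) + e \<cdot>\<^sub>v x"
  using assms
  by (intro eq_vecI) (auto simp: add_mult_distrib_mat_vec add_scalar_prod_distrib[of _ n])

lemma eigenvector_affine_iff:
  fixes A :: "'a::field mat"
  assumes A: "A \<in> carrier_mat n n" and c: "c \<noteq> 0"
  shows "eigenvector (c \<cdot>\<^sub>m A + e \<cdot>\<^sub>m 1\<^sub>m n) x (c * \<mu> + e) \<longleftrightarrow> eigenvector A x \<mu>"
proof -
  have "(c \<cdot>\<^sub>m A + e \<cdot>\<^sub>m 1\<^sub>m n) *\<^sub>v x = (c * \<mu> + e) \<cdot>\<^sub>v x \<longleftrightarrow> A *\<^sub>v x = \<mu> \<cdot>\<^sub>v x"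
    if "x \<in> carrier_vec n"
    using A that c by (auto simp: affine_mult_mat_vec vec_eq_iff algebra_simps)
  moreover have "dim_row (c \<cdot>\<^sub>m A + e \<cdot>\<^sub>m 1\<^sub>m n) = n" "dim_row A = n"
    using A by auto
  ultimately show ?thesis
    unfolding eigenvector_def by auto
qed

lemma tridiag_toeplitz_eigen_eq_first_zero:
  assumes t: "t \<noteq> 0" and x: "x \<in> carrier_vec n"
    and eq: "tridiag_toeplitz n s d t *\<^sub>v x = k \<cdot>\<^sub>v x" and x0: "x $ 0 = 0"
  shows "x = 0\<^sub>v n"
proof -
  have row: "(if 0 < i then s * x $ (i - 1) else 0) + d * x $ i
      + (if i + 1 < n then t * x $ (i + 1) else 0) = k * x $ i" if "i < n" for i
    using arg_cong[OF eq, of "\<lambda>v. v $ i"] tridiag_toeplitz_mult_vec_nth[OF x that] x that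
    by simp
  have "x $ i = 0 \<and> x $ (i + 1) = 0" if "i + 1 < n" for i
    using that
  proof (induction i)
    case 0
    then show ?case using row[of 0] x0 t by simp
  next
    case (Suc i)
    then show ?case using row[of "Suc i"] t by simp
  qed
  then have "x $ i = 0" if "i < n" for i
    using that x0 by (cases i) auto
  then show ?thesis
    using x by (intro eq_vecI) auto
qed

lemma tridiag_toeplitz_eigenvector_unique:
  assumes t: "t \<noteq> 0"
    and x: "eigenvector (tridiag_toeplitz n s d t) x k"
    and y: "eigenvector (tridiag_toeplitz n s d t) y k"
  shows "\<exists>c. y = c \<cdot>\<^sub>v x"
proof -
  let ?A = "tridiag_toeplitz n s d t"
  have A: "?A \<in> carrier_mat n n" by simp
  from x y have xc: "x \<in> carrier_vec n" "x \<noteq> 0\<^sub>v n" "?A *\<^sub>v x = k \<cdot>\<^sub>v x"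
    and yc: "y \<in> carrier_vec n" "?A *\<^sub>v y = k \<cdot>\<^sub>v y"
    unfolding eigenvector_def by auto
  have x0: "x $ 0 \<noteq> 0"
    using tridiag_toeplitz_eigen_eq_first_zero[OF t xc(1,3)] xc(2) by blast
  have n: "0 < n"
    using xc(1,2) by (cases n) (auto intro: eq_vecI)
  define z where "z = x $ 0 \<cdot>\<^sub>v y - y $ 0 \<cdot>\<^sub>v x"
  have zc: "z \<in> carrier_vec n" using xc yc by (simp add: z_def)
  have "?A *\<^sub>v z = x $ 0 \<cdot>\<^sub>v (?A *\<^sub>v y) - y $ 0 \<cdot>\<^sub>v (?A *\<^sub>v x)"
    using A xc yc by (simp add: z_def mult_minus_distrib_mat_vec[of _ n n] mult_mat_vec[of _ n n])
  also have "\<dots> = k \<cdot>\<^sub>v z"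
    using xc yc by (intro eq_vecI) (auto simp: z_def algebra_simps)
  finally have "?A *\<^sub>v z = k \<cdot>\<^sub>v z" .
  moreover have "z $ 0 = 0"
    using xc yc n by (simp add: z_def)
  ultimately have z0: "z = 0\<^sub>v n"
    using tridiag_toeplitz_eigen_eq_first_zero[OF t zc] by blast
  have "x $ 0 * y $ i = y $ 0 * x $ i" if "i < n" for i
    using arg_cong[OF z0, of "\<lambda>v. v $ i"] xc(1) yc(1) that by (simp add: z_def)
  then have "y = (y $ 0 / x $ 0) \<cdot>\<^sub>v x"
    using xc yc x0 by (intro eq_vecI) (auto simp: field_simps)
  then show ?thesis by blast
qed

lemma sin_three_term: "sin (real i * x) + sin (real (i + 2) * x) = 2 * cos x * sin (real (i + 1) * x)"
proof -
  have i: "real i * x = real (i + 1) * x - x" and i2: "real (i + 2) * x = real (i + 1) * x + x"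
    by (simp_all add: algebra_simps)
  show ?thesis
    unfolding i i2 sin_add sin_diff by simp
qed

lemma tridiag_toeplitz_eigenvector_sin:
  fixes r s d t :: complex and h n :: nat
  defines "\<theta> \<equiv> real h * pi / real (n + 1)"
  assumes r: "r \<noteq> 0" "t * r\<^sup>2 = s" and h: "1 \<le> h" "h \<le> n"
  shows "eigenvector (tridiag_toeplitz n s d t)
           (vec n (\<lambda>k. r ^ (k + 1) * of_real (sin (real (k + 1) * \<theta>))))
           (d + 2 * t * r * of_real (cos \<theta>))"
proof -
  define S where "S k = complex_of_real (sin (real k * \<theta>))" for k
  define v where "v = vec n (\<lambda>k. r ^ (k + 1) * S (k + 1))"
  have S0: "S 0 = 0" by (simp add: S_def)
  have Sn: "S (n + 1) = 0"
    unfolding S_def \<theta>_def by (simp add: sin_npi)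
  have S_rec: "S i + S (i + 2) = 2 * of_real (cos \<theta>) * S (i + 1)" for i
    unfolding S_def using sin_three_term[of i \<theta>] by (metis of_real_add of_real_mult of_real_numeral)
  have S1: "S 1 \<noteq> 0"
  proof -
    have "0 < \<theta>" "\<theta> < pi"
      using h by (simp_all add: \<theta>_def divide_less_eq)
    then show ?thesis by (simp add: S_def sin_gt_zero less_imp_neq[symmetric])
  qed
  have v: "v \<in> carrier_vec n" by (simp add: v_def)
  have "(tridiag_toeplitz n s d t *\<^sub>v v) $ i = ((d + 2 * t * r * of_real (cos \<theta>)) \<cdot>\<^sub>v v) $ i"
    if i: "i < n" for i
  proof -
    have lower: "(if 0 < i then s * v $ (i - 1) else 0) = s * r ^ i * S i"
      using i S0 by (cases i) (simp_all add: v_def)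
    have upper: "(if i + 1 < n then t * v $ (i + 1) else 0) = t * r ^ (i + 2) * S (i + 2)"
    proof (cases "i + 1 < n")
      case False
      then have "i + 2 = n + 1" using i by simp
      then show ?thesis using False Sn by simp
    qed (simp add: v_def)
    have "(tridiag_toeplitz n s d t *\<^sub>v v) $ i = s * r ^ i * S i + d * v $ i + t * r ^ (i + 2) * S (i + 2)"
      unfolding tridiag_toeplitz_mult_vec_nth[OF v i] lower upper ..
    also have "\<dots> = d * v $ i + t * r ^ (i + 2) * (S i + S (i + 2))"
      unfolding r(2)[symmetric] by (simp add: power_add power2_eq_square algebra_simps)
    also have "\<dots> = (d + 2 * t * r * of_real (cos \<theta>)) * v $ i"
      unfolding S_rec using i by (simp add: v_def algebra_simps)
    finally show ?thesis
      using i v by simp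
  qed
  moreover have "v $ 0 \<noteq> 0"
    using h r(1) S1 by (simp add: v_def)
  then have "v \<noteq> 0\<^sub>v n"
    using h by auto
  ultimately show ?thesis
    using v unfolding eigenvector_def v_def S_def by (auto intro: eq_vecI)
qed

lemma csqrt_neg_mult_self:
  "csqrt (complex_of_real (- t) * complex_of_real t) = complex_of_real t * (\<i> * of_real (sgn t))"
proof -
  have "csqrt (complex_of_real (- t) * complex_of_real t) = csqrt (complex_of_real (- (t * t)))"
    by simp
  also have "\<dots> = \<i> * complex_of_real (sqrt \<bar>- (t * t)\<bar>)"
    by (subst csqrt_of_real_nonpos) auto
  also have "\<dots> = complex_of_real t * (\<i> * of_real (sgn t))"
    using abs_sgn[of t] by (simp add: real_sqrt_abs2)
  finally show ?thesis .
qed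

lemma eigenvector_skew_tridiag_toeplitz_iff:
  fixes t :: real
  assumes t: "t \<noteq> 0"
  shows "eigenvector (tridiag_toeplitz n (of_real (- t)) d (of_real t)) x
           (tt_eigenvalue n (of_real (- t)) d (of_real t) h)
     \<longleftrightarrow> eigenvector (tridiag_toeplitz n (- 1) 0 1) x
           (2 * \<i> * of_real (sgn t) * of_real (cos (real h * pi / real (n + 1))))"
proof -
  let ?\<mu> = "2 * \<i> * of_real (sgn t) * complex_of_real (cos (real h * pi / real (n + 1)))"
  have "tridiag_toeplitz n (of_real (- t)) d (of_real t)
      = complex_of_real t \<cdot>\<^sub>m tridiag_toeplitz n (- 1) 0 1 + d \<cdot>\<^sub>m 1\<^sub>m n"
    using tridiag_toeplitz_affine[of n "of_real t" "- 1" 0 d 1] by simp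
  moreover have "tt_eigenvalue n (of_real (- t)) d (of_real t) h = complex_of_real t * ?\<mu> + d"
    unfolding tt_eigenvalue_def csqrt_neg_mult_self by (simp add: algebra_simps)
  ultimately show ?thesis
    using eigenvector_affine_iff[of "tridiag_toeplitz n (- 1) 0 1" n "of_real t"] t by simp
qed

lemma unit_cvec_normalize:
  assumes "x \<in> carrier_vec n" and "x \<noteq> 0\<^sub>v n"
  shows "unit_cvec (complex_of_real (1 / sqrt (Re (x \<bullet>c x))) \<cdot>\<^sub>v x)"
proof -
  define N where "N = Re (x \<bullet>c x)"
  have "x \<bullet>c x > 0"
    using assms by simp
  then have N: "x \<bullet>c x = complex_of_real N" "N > 0"
    by (auto simp: N_def less_complex_def complex_eq_iff)
  then show ?thesis
    using assms
    by (simp add: unit_cvec_def conjugate_smult_vec power2_eq_square[symmetric]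
        flip: N_def of_real_power)
qed

lemma eigenvector_normalize:
  assumes A: "A \<in> carrier_mat n n" and x: "eigenvector A x k"
  shows "\<exists>u. eigenvector A u k \<and> unit_cvec u"
proof -
  from x A have xc: "x \<in> carrier_vec n" "x \<noteq> 0\<^sub>v n" "A *\<^sub>v x = k \<cdot>\<^sub>v x"
    unfolding eigenvector_def by auto
  define u where "u = complex_of_real (1 / sqrt (Re (x \<bullet>c x))) \<cdot>\<^sub>v x"
  have unit: "unit_cvec u"
    unfolding u_def using unit_cvec_normalize[OF xc(1,2)] .
  then have "u \<noteq> 0\<^sub>v n"
    by (auto simp: unit_cvec_def)
  moreover have "A *\<^sub>v u = k \<cdot>\<^sub>v u"
    using A xc by (simp add: u_def mult_mat_vec[of _ n n] smult_smult_assoc mult.commute)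
  moreover have "u \<in> carrier_vec n" "dim_row A = n"
    using A xc(1) by (simp_all add: u_def)
  ultimately show ?thesis
    using unit unfolding eigenvector_def by auto
qed

lemma cos_angle_smult_self:
  assumes x: "x \<in> carrier_vec n" and ux: "unit_cvec x" and ucx: "unit_cvec (c \<cdot>\<^sub>v x)"
  shows "cos_angle x (c \<cdot>\<^sub>v x) = 1"
proof -
  have cx: "conjugate x \<in> carrier_vec n"
    using x by simp
  have "(c \<cdot>\<^sub>v x) \<bullet>c x = c"
    using x cx ux by (simp add: unit_cvec_def)
  then have "cos_angle x (c \<cdot>\<^sub>v x) = cmod c"
    by (simp only: cos_angle_def)
  moreover have "(c \<cdot>\<^sub>v x) \<bullet>c (c \<cdot>\<^sub>v x) = complex_of_real ((cmod c)\<^sup>2)"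
    using x cx ux complex_norm_square[of c] by (simp add: unit_cvec_def conjugate_smult_vec)
  then have "(cmod c)\<^sup>2 = 1"
    using ucx of_real_eq_1_iff unfolding unit_cvec_def by metis
  ultimately show ?thesis
    using norm_ge_zero[of c] by (auto simp: power2_eq_1_iff)
qed

lemma tridiag_toeplitz_unit_eigenvectors_cos_angle:
  assumes t: "t \<noteq> 0"
    and x: "eigenvector (tridiag_toeplitz n s d t) x k" "unit_cvec x"
    and y: "eigenvector (tridiag_toeplitz n s d t) y k" "unit_cvec y"
  shows "cos_angle x y = 1"
proof -
  obtain c where "y = c \<cdot>\<^sub>v x"
    using tridiag_toeplitz_eigenvector_unique[OF t x(1) y(1)] by blast
  moreover have "x \<in> carrier_vec n"
    using x(1) by (simp add: eigenvector_def)
  ultimately show ?thesis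
    using cos_angle_smult_self x(2) y(2) by blast
qed

lemma skew_tridiag_toeplitz_unit_eigenvectors:
  fixes t t' :: real and d d' :: complex and h n :: nat
  assumes t: "t \<noteq> 0" and t': "t' \<noteq> 0" and sgn: "sgn t' = sgn t" and h: "1 \<le> h" "h \<le> n"
  defines "A \<equiv> tridiag_toeplitz n (of_real (- t)) d (of_real t)"
    and "A' \<equiv> tridiag_toeplitz n (of_real (- t')) d' (of_real t')"
    and "lam \<equiv> tt_eigenvalue n (of_real (- t)) d (of_real t) h"
    and "lam' \<equiv> tt_eigenvalue n (of_real (- t')) d' (of_real t') h"
  shows "(\<exists>x. eigenvector A x lam \<and> unit_cvec x) \<and> (\<exists>x'. eigenvector A' x' lam' \<and> unit_cvec x')
    \<and> (\<forall>x x'. eigenvector A x lam \<and> unit_cvec x \<and> eigenvector A' x' lam' \<and> unit_cvec x'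
           \<longrightarrow> cos_angle x x' = 1)"
proof -
  define K where "K = tridiag_toeplitz n (- 1) 0 1"
  define \<mu> where "\<mu> = 2 * \<i> * of_real (sgn t) * of_real (cos (real h * pi / real (n + 1)))"
  have "eigenvector K (vec n (\<lambda>k. (\<i> * of_real (sgn t)) ^ (k + 1)
      * of_real (sin (real (k + 1) * (real h * pi / real (n + 1)))))) \<mu>"
    using tridiag_toeplitz_eigenvector_sin[of "\<i> * of_real (sgn t)" 1 "- 1" h n 0] h t
    by (simp add: K_def \<mu>_def power_mult_distrib sgn_if algebra_simps)
  then obtain u where u: "eigenvector K u \<mu>" "unit_cvec u"
    using eigenvector_normalize[of K n] by (auto simp: K_def)
  have eigen_A: "eigenvector A x lam \<longleftrightarrow> eigenvector K x \<mu>" for x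
    unfolding A_def lam_def K_def \<mu>_def by (rule eigenvector_skew_tridiag_toeplitz_iff[OF t])
  have eigen_A': "eigenvector A' x lam' \<longleftrightarrow> eigenvector K x \<mu>" for x
    unfolding A'_def lam'_def K_def \<mu>_def sgn[symmetric]
    by (rule eigenvector_skew_tridiag_toeplitz_iff[OF t'])
  show ?thesis
    unfolding eigen_A eigen_A'
    using u tridiag_toeplitz_unit_eigenvectors_cos_angle[OF one_neq_zero] unfolding K_def by blast
qed

theorem corollary2:
  fixes n :: nat and \<sigma> \<delta> \<tau> \<epsilon> e0 e1 :: real
  assumes "n \<ge> 2"
    and "\<tau> \<noteq> 0" and "\<sigma> = - \<tau>"
    and "\<tau> + \<epsilon> * e1 \<noteq> 0" and "sgn (\<tau> + \<epsilon> * e1) = sgn \<tau>"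
  defines "T \<equiv> tridiag_toeplitz n (of_real \<sigma>) (of_real \<delta>) (of_real \<tau>)"
    and "E \<equiv> tridiag_toeplitz n (of_real (- e1)) (of_real e0) (of_real e1)"
  shows "\<forall>h \<in> {1..n}.
     let lam = tt_eigenvalue n (of_real \<sigma>) (of_real \<delta>) (of_real \<tau>) h;
         lamE = tt_eigenvalue n (of_real (\<sigma> - \<epsilon> * e1)) (of_real (\<delta> + \<epsilon> * e0))
                 (of_real (\<tau> + \<epsilon> * e1)) h
     in (\<exists>x. eigenvector T x lam \<and> unit_cvec x)
      \<and> (\<exists>x'. eigenvector (T + complex_of_real \<epsilon> \<cdot>\<^sub>m E) x' lamE \<and> unit_cvec x')
      \<and> (\<forall>x x'. eigenvector T x lam \<and> unit_cvec x
               \<and> eigenvector (T + complex_of_real \<epsilon> \<cdot>\<^sub>m E) x' lamE \<and> unit_cvec x'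
               \<longrightarrow> cos_angle x x' = 1)"
proof -
  have TE: "T + complex_of_real \<epsilon> \<cdot>\<^sub>m E = tridiag_toeplitz n (of_real (- (\<tau> + \<epsilon> * e1)))
      (of_real (\<delta> + \<epsilon> * e0)) (of_real (\<tau> + \<epsilon> * e1))"
    unfolding T_def E_def assms(3)
    by (rule eq_matI) (auto simp: tridiag_toeplitz_def algebra_simps)
  have \<sigma>': "\<sigma> - \<epsilon> * e1 = - (\<tau> + \<epsilon> * e1)"
    using assms(3) by simp
  show ?thesis
    unfolding Let_def TE \<sigma>' unfolding T_def assms(3)
    by (intro ballI, unfold atLeastAtMost_iff, elim conjE)
      (rule skew_tridiag_toeplitz_unit_eigenvectors[OF assms(2,4,5)])
qed

end
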